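(* Let $\phi : D\to D'$ be a natural transformation between Dirichlet functors. Then $\phi$ is cartesian (i.e. for every function $g:X\to X'$ the naturality square with sides $\phi_{X'}:D(X')\to D'(X')$, $\phi_X:D(X)\to D'(X)$, $D(g)$, $D'(g)$ is a pullback in $\mathbf{Set}$) if and only if the square $D(1)\xrightarrow{\phi_1}D'(1)$ over $D(0)\xrightarrow{\phi_0}D'(0)$ (with vertical maps $D(!_0)$ and $D'(!_0)$) is a pullback. As a corollary, the equivalence $\mathbf{Dir}\simeq\mathbf{Set}^{\downarrow}$ given by evaluation at $!_0$ restricts to an equivalence $\mathbf{Dir}_{\ulcorner}\simeq\mathbf{Set}^{\downarrow}_{\ulcorner}$.
   Context: A Dirichlet functor is a functor $D:\mathbf{Set}^{op}\to\mathbf{Set}$ preserving connected limits; $\mathbf{Dir}$ is the category of Dirichlet functors and natural transformations, which is equivalent to $\mathbf{Set}^{\downarrow}$ (functions $E\to B$ and commuting squares) via $D\mapsto (D(!_0):D(1)\to D(0))$, where $!_0:0\to1$ is the unique map from the empty set. $\mathbf{Dir}_{\ulcorner}$ is the (wide) subcategory of Dirichlet functors and cartesian natural transformations; $\mathbf{Set}^{\downarrow}_{\ulcorner}$ is the subcategory of bundles and morphisms that are pullback squares. *)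

theory Defs
  imports "HOL-Library.FuncSet"
begin

(* The category Set is modelled by the sets of a fixed universe type: objects are
  sets X :: 'a set, morphisms X \<rightarrow> Y are extensional functions g \<in> X in the extensional function space X to Y,
  composition is compose, identities are restrict id X. *)

(* The terminal object 1 and the unique map from the initial object 0 = {} to 1. *)
definition one_set :: "'a set" where
  "one_set = {undefined}"

definition bang0 :: "'a \<Rightarrow> 'a" where
  "bang0 = (\<lambda>x. undefined)"

definition contra_functor ::
  "('a set \<Rightarrow> 'b set) \<Rightarrow> ('a set \<Rightarrow> 'a set \<Rightarrow> ('a \<Rightarrow> 'a) \<Rightarrow> 'b \<Rightarrow> 'b) \<Rightarrow> bool" where
  "contra_functor Dob Dar \<longleftrightarrow>
     (\<forall>X Y g. g \<in> X \<rightarrow>\<^sub>E Y \<longrightarrow> Dar X Y g \<in> Dob Y \<rightarrow>\<^sub>E Dob X) \<and>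
     (\<forall>X. Dar X X (restrict id X) = restrict id (Dob X)) \<and>
     (\<forall>X Y Z f g. f \<in> X \<rightarrow>\<^sub>E Y \<longrightarrow> g \<in> Y \<rightarrow>\<^sub>E Z \<longrightarrow>
        Dar X Z (compose X g f) = compose (Dob Z) (Dar X Y f) (Dar Y Z g))"

definition small_category ::
  "'k set \<Rightarrow> ('k \<Rightarrow> 'k \<Rightarrow> 'k set) \<Rightarrow> ('k \<Rightarrow> 'k) \<Rightarrow> ('k \<Rightarrow> 'k \<Rightarrow> 'k \<Rightarrow> 'k \<Rightarrow> 'k \<Rightarrow> 'k) \<Rightarrow> bool" where
  "small_category Ob Hom Idm Comp \<longleftrightarrow>
     (\<forall>i\<in>Ob. Idm i \<in> Hom i i) \<and>
     (\<forall>i\<in>Ob. \<forall>j\<in>Ob. \<forall>l\<in>Ob. \<forall>u\<in>Hom i j. \<forall>v\<in>Hom j l. Comp i j l v u \<in> Hom i l) \<and>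
     (\<forall>i\<in>Ob. \<forall>j\<in>Ob. \<forall>u\<in>Hom i j. Comp i j j (Idm j) u = u \<and> Comp i i j u (Idm i) = u) \<and>
     (\<forall>i\<in>Ob. \<forall>j\<in>Ob. \<forall>l\<in>Ob. \<forall>m\<in>Ob. \<forall>u\<in>Hom i j. \<forall>v\<in>Hom j l. \<forall>w\<in>Hom l m.
        Comp i l m w (Comp i j l v u) = Comp i j m (Comp j l m w v) u)"

definition connected_cat :: "'k set \<Rightarrow> ('k \<Rightarrow> 'k \<Rightarrow> 'k set) \<Rightarrow> bool" where
  "connected_cat Ob Hom \<longleftrightarrow> Ob \<noteq> {} \<and>
     (let R = {(i, j). i \<in> Ob \<and> j \<in> Ob \<and> Hom i j \<noteq> {}}
      in \<forall>i\<in>Ob. \<forall>j\<in>Ob. (i, j) \<in> (R \<union> R\<inverse>)\<^sup>*)"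

definition set_diagram ::
  "'k set \<Rightarrow> ('k \<Rightarrow> 'k \<Rightarrow> 'k set) \<Rightarrow> ('k \<Rightarrow> 'k) \<Rightarrow> ('k \<Rightarrow> 'k \<Rightarrow> 'k \<Rightarrow> 'k \<Rightarrow> 'k \<Rightarrow> 'k)
    \<Rightarrow> ('k \<Rightarrow> 'a set) \<Rightarrow> ('k \<Rightarrow> 'k \<Rightarrow> 'k \<Rightarrow> 'a \<Rightarrow> 'a) \<Rightarrow> bool" where
  "set_diagram Ob Hom Idm Comp Fob Fmor \<longleftrightarrow>
     (\<forall>i\<in>Ob. \<forall>j\<in>Ob. \<forall>u\<in>Hom i j. Fmor i j u \<in> Fob i \<rightarrow>\<^sub>E Fob j) \<and>
     (\<forall>i\<in>Ob. Fmor i i (Idm i) = restrict id (Fob i)) \<and>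
     (\<forall>i\<in>Ob. \<forall>j\<in>Ob. \<forall>l\<in>Ob. \<forall>u\<in>Hom i j. \<forall>v\<in>Hom j l.
        Fmor i l (Comp i j l v u) = compose (Fob i) (Fmor j l v) (Fmor i j u))"

definition cocone ::
  "'k set \<Rightarrow> ('k \<Rightarrow> 'k \<Rightarrow> 'k set) \<Rightarrow> ('k \<Rightarrow> 'a set) \<Rightarrow> ('k \<Rightarrow> 'k \<Rightarrow> 'k \<Rightarrow> 'a \<Rightarrow> 'a)
    \<Rightarrow> 'a set \<Rightarrow> ('k \<Rightarrow> 'a \<Rightarrow> 'a) \<Rightarrow> bool" where
  "cocone Ob Hom Fob Fmor L \<iota> \<longleftrightarrow>
     (\<forall>i\<in>Ob. \<iota> i \<in> Fob i \<rightarrow>\<^sub>E L) \<and>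
     (\<forall>i\<in>Ob. \<forall>j\<in>Ob. \<forall>u\<in>Hom i j. compose (Fob i) (\<iota> j) (Fmor i j u) = \<iota> i)"

definition colimit ::
  "'k set \<Rightarrow> ('k \<Rightarrow> 'k \<Rightarrow> 'k set) \<Rightarrow> ('k \<Rightarrow> 'a set) \<Rightarrow> ('k \<Rightarrow> 'k \<Rightarrow> 'k \<Rightarrow> 'a \<Rightarrow> 'a)
    \<Rightarrow> 'a set \<Rightarrow> ('k \<Rightarrow> 'a \<Rightarrow> 'a) \<Rightarrow> bool" where
  "colimit Ob Hom Fob Fmor L \<iota> \<longleftrightarrow>
     cocone Ob Hom Fob Fmor L \<iota> \<and>
     (\<forall>(Y :: 'a set) \<tau>. cocone Ob Hom Fob Fmor Y \<tau> \<longrightarrow>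
        (\<exists>!h. h \<in> L \<rightarrow>\<^sub>E Y \<and> (\<forall>i\<in>Ob. compose (Fob i) h (\<iota> i) = \<tau> i)))"

definition op_cone ::
  "'k set \<Rightarrow> ('k \<Rightarrow> 'k \<Rightarrow> 'k set) \<Rightarrow> ('k \<Rightarrow> 'b set) \<Rightarrow> ('k \<Rightarrow> 'k \<Rightarrow> 'k \<Rightarrow> 'b \<Rightarrow> 'b)
    \<Rightarrow> 'b set \<Rightarrow> ('k \<Rightarrow> 'b \<Rightarrow> 'b) \<Rightarrow> bool" where
  "op_cone Ob Hom Gob Gmor M \<pi> \<longleftrightarrow>
     (\<forall>i\<in>Ob. \<pi> i \<in> M \<rightarrow>\<^sub>E Gob i) \<and>
     (\<forall>i\<in>Ob. \<forall>j\<in>Ob. \<forall>u\<in>Hom i j. compose M (Gmor i j u) (\<pi> j) = \<pi> i)"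

definition op_limit ::
  "'k set \<Rightarrow> ('k \<Rightarrow> 'k \<Rightarrow> 'k set) \<Rightarrow> ('k \<Rightarrow> 'b set) \<Rightarrow> ('k \<Rightarrow> 'k \<Rightarrow> 'k \<Rightarrow> 'b \<Rightarrow> 'b)
    \<Rightarrow> 'b set \<Rightarrow> ('k \<Rightarrow> 'b \<Rightarrow> 'b) \<Rightarrow> bool" where
  "op_limit Ob Hom Gob Gmor M \<pi> \<longleftrightarrow>
     op_cone Ob Hom Gob Gmor M \<pi> \<and>
     (\<forall>(Z :: 'b set) \<sigma>. op_cone Ob Hom Gob Gmor Z \<sigma> \<longrightarrow>
        (\<exists>!h. h \<in> Z \<rightarrow>\<^sub>E M \<and> (\<forall>i\<in>Ob. compose Z (\<pi> i) h = \<sigma> i)))"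

(* Dirichlet functor: a functor Set^op \<rightarrow> Set preserving connected limits, i.e. sending
  colimits in Set of small connected diagrams to limits in Set. *)
definition dirichlet ::
  "('a set \<Rightarrow> 'b set) \<Rightarrow> ('a set \<Rightarrow> 'a set \<Rightarrow> ('a \<Rightarrow> 'a) \<Rightarrow> 'b \<Rightarrow> 'b) \<Rightarrow> bool" where
  "dirichlet Dob Dar \<longleftrightarrow>
     contra_functor Dob Dar \<and>
     (\<forall>(Ob :: 'a set set) Hom Idm Comp Fob Fmor L \<iota>.
        small_category Ob Hom Idm Comp \<and> connected_cat Ob Hom \<and>
        set_diagram Ob Hom Idm Comp Fob Fmor \<and> colimit Ob Hom Fob Fmor L \<iota> \<longrightarrow>
        op_limit Ob Hom (\<lambda>i. Dob (Fob i)) (\<lambda>i j u. Dar (Fob i) (Fob j) (Fmor i j u))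
          (Dob L) (\<lambda>i. Dar (Fob i) L (\<iota> i)))"

definition nat_trans ::
  "('a set \<Rightarrow> 'b set) \<Rightarrow> ('a set \<Rightarrow> 'a set \<Rightarrow> ('a \<Rightarrow> 'a) \<Rightarrow> 'b \<Rightarrow> 'b) \<Rightarrow>
   ('a set \<Rightarrow> 'b set) \<Rightarrow> ('a set \<Rightarrow> 'a set \<Rightarrow> ('a \<Rightarrow> 'a) \<Rightarrow> 'b \<Rightarrow> 'b) \<Rightarrow>
   ('a set \<Rightarrow> 'b \<Rightarrow> 'b) \<Rightarrow> bool" where
  "nat_trans Dob Dar Dob' Dar' \<phi> \<longleftrightarrow>
     (\<forall>X. \<phi> X \<in> Dob X \<rightarrow> Dob' X) \<and>
     (\<forall>X Y g. g \<in> X \<rightarrow>\<^sub>E Y \<longrightarrow> (\<forall>y\<in>Dob Y. \<phi> X (Dar X Y g y) = Dar' X Y g (\<phi> Y y)))"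

definition is_pullback ::
  "'b set \<Rightarrow> 'b set \<Rightarrow> 'b set \<Rightarrow> 'b set \<Rightarrow> ('b \<Rightarrow> 'b) \<Rightarrow> ('b \<Rightarrow> 'b) \<Rightarrow> ('b \<Rightarrow> 'b) \<Rightarrow> ('b \<Rightarrow> 'b) \<Rightarrow> bool" where
  "is_pullback A B C P f p q h \<longleftrightarrow>
     f \<in> A \<rightarrow> B \<and> p \<in> A \<rightarrow> C \<and> q \<in> B \<rightarrow> P \<and> h \<in> C \<rightarrow> P \<and>
     (\<forall>a\<in>A. q (f a) = h (p a)) \<and>
     (\<forall>(T :: 'b set) s t. s \<in> T \<rightarrow> B \<longrightarrow> t \<in> T \<rightarrow> C \<longrightarrow> (\<forall>x\<in>T. q (s x) = h (t x)) \<longrightarrow>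
        (\<exists>!u. u \<in> T \<rightarrow>\<^sub>E A \<and> (\<forall>x\<in>T. f (u x) = s x \<and> p (u x) = t x)))"

definition cartesian ::
  "('a set \<Rightarrow> 'b set) \<Rightarrow> ('a set \<Rightarrow> 'a set \<Rightarrow> ('a \<Rightarrow> 'a) \<Rightarrow> 'b \<Rightarrow> 'b) \<Rightarrow>
   ('a set \<Rightarrow> 'b set) \<Rightarrow> ('a set \<Rightarrow> 'a set \<Rightarrow> ('a \<Rightarrow> 'a) \<Rightarrow> 'b \<Rightarrow> 'b) \<Rightarrow>
   ('a set \<Rightarrow> 'b \<Rightarrow> 'b) \<Rightarrow> bool" where
  "cartesian Dob Dar Dob' Dar' \<phi> \<longleftrightarrow>
     (\<forall>X X' g. g \<in> X \<rightarrow>\<^sub>E X' \<longrightarrow>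
        is_pullback (Dob X') (Dob' X') (Dob X) (Dob' X) (\<phi> X') (Dar X X' g) (Dar' X X' g) (\<phi> X))"

end

(* A Dirichlet functor turns the presentation of a set X as copies of 1, one for each
  x in X, glued along 0 into a limit: D(X) is the X-fold fibre product of D(1) over D(0),
  via the maps D(x) for x : 1 -> X and D(!_X) for !_X : 0 -> X.  If the naturality square
  of !_0 : 0 -> 1 is a pullback, this description shows, one point of X at a time, that the
  square of !_X is a pullback for every X.  For g : X -> X' we have !_X' = g o !_X, so the
  square of !_X' is the square of g pasted onto that of !_X, and the pullback lemma makes
  the square of g a pullback.  The converse is the instance g = !_0. *)

theory Submission
  imports Defs
begin

lemma PiE_empty_eq_bang0: "f \<in> {} \<rightarrow>\<^sub>E Y \<Longrightarrow> f = bang0"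
  by (simp add: bang0_def)

lemma bang0_PiE: "bang0 \<in> {} \<rightarrow>\<^sub>E Y"
  by (simp add: bang0_def)

lemma compose_empty: "compose {} g f = bang0"
  by (simp add: compose_def restrict_def bang0_def)

definition point :: "'a \<Rightarrow> 'a \<Rightarrow> 'a" where
  "point x = (\<lambda>_\<in>one_set. x)"

lemma point_PiE: "x \<in> X \<Longrightarrow> point x \<in> one_set \<rightarrow>\<^sub>E X"
  by (simp add: point_def)

lemma point_eq_iff: "point x = point y \<longleftrightarrow> x = y"
  by (metis point_def one_set_def restrict_apply' singletonI)

lemma compose_point: "compose one_set g (point x) = point (g x)"
  by (auto simp: compose_def point_def one_set_def intro: restrict_ext)

lemma PiE_one_set_eq_point: "f \<in> one_set \<rightarrow>\<^sub>E Y \<Longrightarrow> f = point (f undefined)"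
  by (auto simp: point_def one_set_def PiE_iff extensional_def)

lemma is_pullback_unique_fill:
  fixes A :: "'b set"
  assumes "is_pullback A B C P f p q h" "b \<in> B" "c \<in> C" "q b = h c"
  shows "\<exists>!a. a \<in> A \<and> f a = b \<and> p a = c"
proof -
  have "\<exists>!u. u \<in> {b} \<rightarrow>\<^sub>E A \<and> (\<forall>x\<in>{b}. f (u x) = b \<and> p (u x) = c)"
  proof -
    have "\<forall>(T :: 'b set) s t. s \<in> T \<rightarrow> B \<longrightarrow> t \<in> T \<rightarrow> C \<longrightarrow> (\<forall>x\<in>T. q (s x) = h (t x)) \<longrightarrow>
        (\<exists>!u. u \<in> T \<rightarrow>\<^sub>E A \<and> (\<forall>x\<in>T. f (u x) = s x \<and> p (u x) = t x))"
      using assms(1) by (simp add: is_pullback_def)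
    from this[rule_format, where T="{b}" and s="\<lambda>_. b" and t="\<lambda>_. c"] show ?thesis using assms(2-4) by simp
  qed
  then obtain u where u: "u \<in> {b} \<rightarrow>\<^sub>E A \<and> (\<forall>x\<in>{b}. f (u x) = b \<and> p (u x) = c)"
    and uniq: "\<And>u'. u' \<in> {b} \<rightarrow>\<^sub>E A \<and> (\<forall>x\<in>{b}. f (u' x) = b \<and> p (u' x) = c) \<Longrightarrow> u' = u"
    by (elim ex1E) blast
  show ?thesis
  proof (rule ex1I[of _ "u b"])
    show "u b \<in> A \<and> f (u b) = b \<and> p (u b) = c" using u by auto
  next
    fix a assume "a \<in> A \<and> f a = b \<and> p a = c"
    then have "(\<lambda>_\<in>{b}. a) = u" by (intro uniq) simp
    then show "a = u b" by auto
  qed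
qed

lemma is_pullbackI:
  assumes "f \<in> A \<rightarrow> B" "p \<in> A \<rightarrow> C" "q \<in> B \<rightarrow> P" "h \<in> C \<rightarrow> P"
    and "\<And>a. a \<in> A \<Longrightarrow> q (f a) = h (p a)"
    and fill: "\<And>b c. b \<in> B \<Longrightarrow> c \<in> C \<Longrightarrow> q b = h c \<Longrightarrow> \<exists>!a. a \<in> A \<and> f a = b \<and> p a = c"
  shows "is_pullback A B C P f p q h"
  unfolding is_pullback_def
proof (intro conjI allI impI)
  show "f \<in> A \<rightarrow> B" "p \<in> A \<rightarrow> C" "q \<in> B \<rightarrow> P" "h \<in> C \<rightarrow> P" by fact+
  show "\<forall>a\<in>A. q (f a) = h (p a)" using assms(5) by blast
  fix T :: "'b set" and s t
  assume s: "s \<in> T \<rightarrow> B" and t: "t \<in> T \<rightarrow> C" and st: "\<forall>x\<in>T. q (s x) = h (t x)"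
  have fill_T: "\<exists>!a. a \<in> A \<and> f a = s x \<and> p a = t x" if "x \<in> T" for x
    using that s t st by (intro fill) auto
  define u where "u = (\<lambda>x\<in>T. THE a. a \<in> A \<and> f a = s x \<and> p a = t x)"
  have u: "u x \<in> A \<and> f (u x) = s x \<and> p (u x) = t x" if "x \<in> T" for x
    unfolding u_def using theI'[OF fill_T[OF that]] that by simp
  show "\<exists>!u. u \<in> T \<rightarrow>\<^sub>E A \<and> (\<forall>x\<in>T. f (u x) = s x \<and> p (u x) = t x)"
  proof (rule ex1I[of _ u])
    show "u \<in> T \<rightarrow>\<^sub>E A \<and> (\<forall>x\<in>T. f (u x) = s x \<and> p (u x) = t x)"
      using u by (auto simp: u_def)
  next
    fix v assume v: "v \<in> T \<rightarrow>\<^sub>E A \<and> (\<forall>x\<in>T. f (v x) = s x \<and> p (v x) = t x)"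
    show "v = u"
    proof (rule PiE_ext[of _ T "\<lambda>_. A"])
      show "v \<in> T \<rightarrow>\<^sub>E A" using v by blast
      show "u \<in> T \<rightarrow>\<^sub>E A" using u by (auto simp: u_def)
      fix x assume x: "x \<in> T"
      have "v x \<in> A" using v x by auto
      then show "v x = u x" using the1_equality[OF fill_T[OF x], of "v x"] v x by (simp add: u_def)
    qed
  qed
qed

lemma is_pullback_pasting_left:
  assumes left: "f \<in> A \<rightarrow> B" "p \<in> A \<rightarrow> C" "q \<in> B \<rightarrow> P" "\<And>a. a \<in> A \<Longrightarrow> q (f a) = h (p a)"
    and right: "is_pullback C P E F h r s k"
    and outer: "is_pullback A B E F f p' q' k"
    and p': "\<And>a. a \<in> A \<Longrightarrow> p' a = r (p a)"
    and q': "\<And>b. b \<in> B \<Longrightarrow> q' b = s (q b)"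
  shows "is_pullback A B C P f p q h"
proof (rule is_pullbackI[OF left(1-3) _ left(4)])
  show h: "h \<in> C \<rightarrow> P" using right by (simp add: is_pullback_def)
  have r: "r \<in> C \<rightarrow> E" and sq: "\<And>c. c \<in> C \<Longrightarrow> s (h c) = k (r c)"
    using right by (auto simp: is_pullback_def)
  fix b c assume b: "b \<in> B" and c: "c \<in> C" and bc: "q b = h c"
  have "q' b = k (r c)" using q'[OF b] bc sq[OF c] by simp
  then have "\<exists>!a. a \<in> A \<and> f a = b \<and> p' a = r c"
    using is_pullback_unique_fill[OF outer b] r c by blast
  then obtain a where a: "a \<in> A" "f a = b" "p' a = r c"
    and a_uniq: "\<And>a'. a' \<in> A \<Longrightarrow> f a' = b \<Longrightarrow> p' a' = r c \<Longrightarrow> a' = a"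
    by blast
  have "p a \<in> C" "h (p a) = h c" "r (p a) = r c"
    using left(2,4) a p'[OF a(1)] bc by auto
  then have "p a = c"
    using is_pullback_unique_fill[OF right h[THEN funcset_mem, OF c] r[THEN funcset_mem, OF c] sq[OF c]] c
    by blast
  with a a_uniq p' show "\<exists>!a. a \<in> A \<and> f a = b \<and> p a = c"
    by (metis (mono_tags))
qed

lemma contra_functor_Dar_in:
  assumes "contra_functor Dob Dar" "g \<in> X \<rightarrow>\<^sub>E Y" "w \<in> Dob Y"
  shows "Dar X Y g w \<in> Dob X"
proof -
  have "Dar X Y g \<in> Dob Y \<rightarrow>\<^sub>E Dob X"
    using assms(1,2) unfolding contra_functor_def by simp
  then show ?thesis using assms(3) by (rule PiE_mem)
qed

lemma contra_functor_Dar_id: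
  assumes "contra_functor Dob Dar" "w \<in> Dob X"
  shows "Dar X X (restrict id X) w = w"
proof -
  have "Dar X X (restrict id X) = restrict id (Dob X)"
    using assms(1) unfolding contra_functor_def by simp
  then show ?thesis using assms(2) by simp
qed

lemma contra_functor_Dar_compose:
  assumes "contra_functor Dob Dar" "f \<in> X \<rightarrow>\<^sub>E Y" "g \<in> Y \<rightarrow>\<^sub>E Z" "w \<in> Dob Z"
  shows "Dar X Z (compose X g f) w = Dar X Y f (Dar Y Z g w)"
proof -
  have "Dar X Z (compose X g f) = compose (Dob Z) (Dar X Y f) (Dar Y Z g)"
    using assms(1-3) unfolding contra_functor_def by simp
  then show ?thesis using assms(4) by (simp add: compose_eq)
qed

lemma contra_functor_Dar_bang0:
  assumes "contra_functor Dob Dar" "g \<in> X \<rightarrow>\<^sub>E Y" "w \<in> Dob Y"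
  shows "Dar {} X bang0 (Dar X Y g w) = Dar {} Y bang0 w"
  using contra_functor_Dar_compose[OF assms(1) bang0_PiE assms(2,3)] by (simp add: compose_empty)

lemma nat_trans_in: "nat_trans Dob Dar Dob' Dar' \<phi> \<Longrightarrow> w \<in> Dob X \<Longrightarrow> \<phi> X w \<in> Dob' X"
  unfolding nat_trans_def by blast

lemma nat_trans_commute:
  "nat_trans Dob Dar Dob' Dar' \<phi> \<Longrightarrow> g \<in> X \<rightarrow>\<^sub>E Y \<Longrightarrow> w \<in> Dob Y \<Longrightarrow>
    \<phi> X (Dar X Y g w) = Dar' X Y g (\<phi> Y w)"
  unfolding nat_trans_def by blast

lemma op_limit_eqI:
  fixes M :: "'b set"
  assumes lim: "op_limit Ob Hom Gob Gmor M \<pi>" and w: "w1 \<in> M" "w2 \<in> M"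
    and eq: "\<And>i. i \<in> Ob \<Longrightarrow> \<pi> i w1 = \<pi> i w2"
  shows "w1 = w2"
proof -
  have \<pi>: "\<pi> i \<in> M \<rightarrow>\<^sub>E Gob i" if "i \<in> Ob" for i
    using lim that by (simp add: op_limit_def op_cone_def)
  have compat: "Gmor i j u (\<pi> j w1) = \<pi> i w1" if "i \<in> Ob" "j \<in> Ob" "u \<in> Hom i j" for i j u
  proof -
    have "compose M (Gmor i j u) (\<pi> j) = \<pi> i"
      using lim that by (simp add: op_limit_def op_cone_def)
    then show ?thesis using compose_eq[OF w(1), of "Gmor i j u" "\<pi> j"] by simp
  qed
  define \<sigma> where "\<sigma> i = (\<lambda>_\<in>{w1}. \<pi> i w1)" for i
  have "op_cone Ob Hom Gob Gmor {w1} \<sigma>"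
    unfolding op_cone_def \<sigma>_def
  proof (intro conjI ballI)
    fix i assume "i \<in> Ob"
    then show "(\<lambda>_\<in>{w1}. \<pi> i w1) \<in> {w1} \<rightarrow>\<^sub>E Gob i" using \<pi> w(1) by auto
    fix j u assume "j \<in> Ob" "u \<in> Hom i j"
    then show "compose {w1} (Gmor i j u) (\<lambda>_\<in>{w1}. \<pi> j w1) = (\<lambda>_\<in>{w1}. \<pi> i w1)"
      using compat[OF \<open>i \<in> Ob\<close>] unfolding compose_def by (intro restrict_ext) simp
  qed
  then have "\<exists>!h. h \<in> {w1} \<rightarrow>\<^sub>E M \<and> (\<forall>i\<in>Ob. compose {w1} (\<pi> i) h = \<sigma> i)"
    using lim by (simp add: op_limit_def)
  moreover have "(\<lambda>_\<in>{w1}. w) \<in> {w1} \<rightarrow>\<^sub>E M \<and> (\<forall>i\<in>Ob. compose {w1} (\<pi> i) (\<lambda>_\<in>{w1}. w) = \<sigma> i)"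
    if "w \<in> {w1, w2}" for w
    using that w eq by (auto simp: compose_def \<sigma>_def)
  ultimately have "(\<lambda>_\<in>{w1}. w1) = (\<lambda>_\<in>{w1}. w2)"
    by (metis insertCI)
  then show ?thesis by (metis restrict_apply' singletonI)
qed

lemma op_limit_lift:
  fixes M :: "'b set"
  assumes lim: "op_limit Ob Hom Gob Gmor M \<pi>"
    and e: "\<And>i. i \<in> Ob \<Longrightarrow> e i \<in> Gob i"
    and compat: "\<And>i j u. i \<in> Ob \<Longrightarrow> j \<in> Ob \<Longrightarrow> u \<in> Hom i j \<Longrightarrow> Gmor i j u (e j) = e i"
  shows "\<exists>w\<in>M. \<forall>i\<in>Ob. \<pi> i w = e i"
proof -
  define \<sigma> where "\<sigma> i = (\<lambda>_\<in>{undefined :: 'b}. e i)" for i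
  have "op_cone Ob Hom Gob Gmor {undefined} \<sigma>"
    unfolding op_cone_def \<sigma>_def
  proof (intro conjI ballI)
    fix i assume "i \<in> Ob"
    then show "(\<lambda>_\<in>{undefined}. e i) \<in> {undefined} \<rightarrow>\<^sub>E Gob i" using e by auto
    fix j u assume "j \<in> Ob" "u \<in> Hom i j"
    then show "compose {undefined} (Gmor i j u) (\<lambda>_\<in>{undefined}. e j) = (\<lambda>_\<in>{undefined}. e i)"
      using compat[OF \<open>i \<in> Ob\<close>] unfolding compose_def by (intro restrict_ext) simp
  qed
  then obtain h where h: "h \<in> {undefined} \<rightarrow>\<^sub>E M" "\<forall>i\<in>Ob. compose {undefined} (\<pi> i) h = \<sigma> i"
    using lim unfolding op_limit_def by blast
  have "\<pi> i (h undefined) = e i" if "i \<in> Ob" for i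
    using fun_cong[OF h(2)[rule_format, OF that], of undefined] by (simp add: compose_def \<sigma>_def)
  moreover have "h undefined \<in> M" using h(1) by auto
  ultimately show ?thesis by blast
qed

text \<open>\<open>X\<close> as the colimit of a connected diagram: an object \<open>{}\<close> sent to \<open>0\<close>,
  for each \<open>x \<in> X\<close> an object \<open>{x}\<close> sent to \<open>1\<close>, and one arrow \<open>{} \<rightarrow> {x}\<close>; every
  arrow, identities included, is tagged \<open>{}\<close>.\<close>

definition star_ob :: "'a set \<Rightarrow> 'a set set" where
  "star_ob X = insert {} ((\<lambda>x. {x}) ` X)"

definition star_hom :: "'a set \<Rightarrow> 'a set \<Rightarrow> 'a set set" where
  "star_hom i j = (if i = j \<or> i = {} then {{}} else {})"

definition star_id :: "'a set \<Rightarrow> 'a set" where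
  "star_id i = {}"

definition star_comp :: "'a set \<Rightarrow> 'a set \<Rightarrow> 'a set \<Rightarrow> 'a set \<Rightarrow> 'a set \<Rightarrow> 'a set" where
  "star_comp i j l v u = {}"

definition star_fob :: "'a set \<Rightarrow> 'a set" where
  "star_fob i = (if i = {} then {} else one_set)"

definition star_fmor :: "'a set \<Rightarrow> 'a set \<Rightarrow> 'a set \<Rightarrow> 'a \<Rightarrow> 'a" where
  "star_fmor i j u = (if i = j then restrict id (star_fob i) else bang0)"

definition star_inj :: "'a set \<Rightarrow> 'a \<Rightarrow> 'a" where
  "star_inj i = (if i = {} then bang0 else point (the_elem i))"

lemma star_hom_nonempty: "u \<in> star_hom i j \<Longrightarrow> i = j \<or> i = {}"
  by (simp add: star_hom_def split: if_splits)

lemma star_fmor_empty: "star_fmor {} j u = bang0"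
  by (simp add: star_fmor_def star_fob_def restrict_def bang0_def)

lemma small_category_star: "small_category (star_ob X) star_hom star_id star_comp"
  unfolding small_category_def star_hom_def star_id_def star_comp_def by auto

lemma connected_cat_star: "connected_cat (star_ob X) star_hom"
proof -
  define R where "R = {(i, j). i \<in> star_ob X \<and> j \<in> star_ob X \<and> star_hom i j \<noteq> {}}"
  have "({}, i) \<in> R" if "i \<in> star_ob X" for i
    using that by (simp add: R_def star_ob_def star_hom_def)
  then have "(i, j) \<in> (R \<union> R\<inverse>)\<^sup>*" if "i \<in> star_ob X" "j \<in> star_ob X" for i j
    using that by (meson UnI1 UnI2 converse_iff r_into_rtrancl rtrancl_trans)
  then show ?thesis
    unfolding connected_cat_def Let_def R_def[symmetric] by (auto simp: star_ob_def)
qed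

lemma set_diagram_star: "set_diagram (star_ob X) star_hom star_id star_comp star_fob star_fmor"
  unfolding set_diagram_def
proof (intro conjI ballI)
  fix i j u assume "u \<in> star_hom i j"
  then show "star_fmor i j u \<in> star_fob i \<rightarrow>\<^sub>E star_fob j"
    by (auto dest: star_hom_nonempty simp: star_fmor_def star_fob_def bang0_def)
next
  fix i j l u v assume "u \<in> star_hom i j" "v \<in> star_hom j l"
  show "star_fmor i l (star_comp i j l v u) = compose (star_fob i) (star_fmor j l v) (star_fmor i j u)"
  proof (cases "i = {}")
    case True
    then show ?thesis by (simp add: star_fmor_empty star_fob_def compose_empty)
  next
    case False
    then have "j = i" "l = i"
      using star_hom_nonempty[OF \<open>u \<in> star_hom i j\<close>] star_hom_nonempty[OF \<open>v \<in> star_hom j l\<close>] by auto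
    then show ?thesis by (simp add: star_fmor_def compose_def cong: restrict_cong)
  qed
qed (simp add: star_fmor_def)

lemma cocone_star_iff:
  "cocone (star_ob X) star_hom star_fob star_fmor Y \<tau> \<longleftrightarrow> (\<forall>i\<in>star_ob X. \<tau> i \<in> star_fob i \<rightarrow>\<^sub>E Y)"
proof -
  have "compose (star_fob i) (\<tau> j) (star_fmor i j u) = \<tau> i"
    if "\<tau> i \<in> star_fob i \<rightarrow>\<^sub>E Y" "u \<in> star_hom i j" for i j u
  proof (cases "i = {}")
    case True
    then show ?thesis using that(1) by (simp add: star_fob_def compose_empty bang0_def)
  next
    case False
    then show ?thesis using that star_hom_nonempty[OF that(2)]
      by (auto simp: star_fmor_def compose_def PiE_iff intro: extensionalityI[of _ "star_fob i"])
  qed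
  then show ?thesis unfolding cocone_def by blast
qed

lemma colimit_star: "colimit (star_ob X) star_hom star_fob star_fmor X star_inj"
  unfolding colimit_def
proof (intro conjI allI impI)
  show "cocone (star_ob X) star_hom star_fob star_fmor X star_inj"
    unfolding cocone_star_iff by (auto simp: star_ob_def star_fob_def star_inj_def bang0_def point_PiE)
  fix Y \<tau> assume "cocone (star_ob X) star_hom star_fob star_fmor Y \<tau>"
  then have \<tau>: "\<tau> i \<in> star_fob i \<rightarrow>\<^sub>E Y" if "i \<in> star_ob X" for i
    using that by (simp add: cocone_star_iff)
  have \<tau>_empty: "\<tau> {} = bang0"
    using \<tau>[of "{}"] by (simp add: star_ob_def star_fob_def PiE_empty_eq_bang0)
  have \<tau>_point: "\<tau> {x} = point (\<tau> {x} undefined)" "\<tau> {x} undefined \<in> Y" if "x \<in> X" for x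
    using \<tau>[of "{x}"] that PiE_one_set_eq_point[of "\<tau> {x}" Y]
    by (auto simp: star_ob_def star_fob_def one_set_def)
  have factors_iff: "(\<forall>i\<in>star_ob X. compose (star_fob i) k (star_inj i) = \<tau> i) \<longleftrightarrow>
      (\<forall>x\<in>X. k x = \<tau> {x} undefined)" for k
    using \<tau>_point by (auto simp: star_ob_def star_fob_def star_inj_def compose_empty \<tau>_empty
        compose_point point_eq_iff) (metis point_eq_iff)
  show "\<exists>!k. k \<in> X \<rightarrow>\<^sub>E Y \<and> (\<forall>i\<in>star_ob X. compose (star_fob i) k (star_inj i) = \<tau> i)"
    unfolding factors_iff
  proof (rule ex1I[of _ "\<lambda>x\<in>X. \<tau> {x} undefined"])
    fix k assume "k \<in> X \<rightarrow>\<^sub>E Y \<and> (\<forall>x\<in>X. k x = \<tau> {x} undefined)"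
    then show "k = (\<lambda>x\<in>X. \<tau> {x} undefined)" by (auto simp: PiE_iff intro: extensionalityI)
  qed (use \<tau>_point in auto)
qed

lemma dirichlet_contra_functor: "dirichlet Dob Dar \<Longrightarrow> contra_functor Dob Dar"
  by (simp add: dirichlet_def)

lemma dirichlet_star_limit:
  "dirichlet Dob Dar \<Longrightarrow>
    op_limit (star_ob X) star_hom (\<lambda>i. Dob (star_fob i))
      (\<lambda>i j u. Dar (star_fob i) (star_fob j) (star_fmor i j u)) (Dob X) (\<lambda>i. Dar (star_fob i) X (star_inj i))"
  using small_category_star connected_cat_star set_diagram_star colimit_star
  unfolding dirichlet_def by blast

lemma dirichlet_eqI:
  assumes "dirichlet Dob Dar" "w1 \<in> Dob X" "w2 \<in> Dob X"
    and "\<And>x. x \<in> X \<Longrightarrow> Dar one_set X (point x) w1 = Dar one_set X (point x) w2"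
    and "Dar {} X bang0 w1 = Dar {} X bang0 w2"
  shows "w1 = w2"
proof (rule op_limit_eqI[OF dirichlet_star_limit[OF assms(1)] assms(2,3)])
  fix i assume "i \<in> star_ob X"
  then show "Dar (star_fob i) X (star_inj i) w1 = Dar (star_fob i) X (star_inj i) w2"
    using assms(4,5) by (auto simp: star_ob_def star_fob_def star_inj_def)
qed

lemma dirichlet_glue:
  assumes D: "dirichlet Dob Dar" and c: "c \<in> Dob {}"
    and a: "\<And>x. x \<in> X \<Longrightarrow> a x \<in> Dob one_set" "\<And>x. x \<in> X \<Longrightarrow> Dar {} one_set bang0 (a x) = c"
  obtains w where "w \<in> Dob X" "\<And>x. x \<in> X \<Longrightarrow> Dar one_set X (point x) w = a x"
    "Dar {} X bang0 w = c"
proof -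
  define e where "e i = (if i = {} then c else a (the_elem i))" for i
  have "Dar (star_fob i) (star_fob j) (star_fmor i j u) (e j) = e i"
    if "i \<in> star_ob X" "j \<in> star_ob X" "u \<in> star_hom i j" for i j u
    using that star_hom_nonempty[OF that(3)] a c contra_functor_Dar_id[OF dirichlet_contra_functor[OF D]]
    by (auto simp: star_ob_def star_fob_def star_fmor_def e_def)
  moreover have "e i \<in> Dob (star_fob i)" if "i \<in> star_ob X" for i
    using that a c by (auto simp: star_ob_def star_fob_def e_def)
  ultimately obtain w where "w \<in> Dob X" "\<forall>i\<in>star_ob X. Dar (star_fob i) X (star_inj i) w = e i"
    using op_limit_lift[OF dirichlet_star_limit[OF D]] by metis
  then show ?thesis
    by (intro that) (force simp: star_ob_def star_fob_def star_inj_def e_def)+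
qed

lemma dirichlet_bang0_pullback:
  assumes D: "dirichlet Dob Dar" and D': "dirichlet Dob' Dar'"
    and N: "nat_trans Dob Dar Dob' Dar' \<phi>"
    and pb: "is_pullback (Dob one_set) (Dob' one_set) (Dob {}) (Dob' {})
      (\<phi> one_set) (Dar {} one_set bang0) (Dar' {} one_set bang0) (\<phi> {})"
  shows "is_pullback (Dob X) (Dob' X) (Dob {}) (Dob' {})
      (\<phi> X) (Dar {} X bang0) (Dar' {} X bang0) (\<phi> {})"
proof (rule is_pullbackI)
  have F: "contra_functor Dob Dar" and F': "contra_functor Dob' Dar'"
    using D D' by (simp_all add: dirichlet_contra_functor)
  show "\<phi> X \<in> Dob X \<rightarrow> Dob' X" "\<phi> {} \<in> Dob {} \<rightarrow> Dob' {}"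
    using nat_trans_in[OF N] by auto
  show "Dar {} X bang0 \<in> Dob X \<rightarrow> Dob {}" "Dar' {} X bang0 \<in> Dob' X \<rightarrow> Dob' {}"
    using contra_functor_Dar_in[OF F bang0_PiE] contra_functor_Dar_in[OF F' bang0_PiE] by auto
  show "Dar' {} X bang0 (\<phi> X w) = \<phi> {} (Dar {} X bang0 w)" if "w \<in> Dob X" for w
    using nat_trans_commute[OF N bang0_PiE that] by simp
  fix y c assume y: "y \<in> Dob' X" and c: "c \<in> Dob {}" and yc: "Dar' {} X bang0 y = \<phi> {} c"
  define fibre where "fibre x a \<longleftrightarrow> a \<in> Dob one_set \<and>
      \<phi> one_set a = Dar' one_set X (point x) y \<and> Dar {} one_set bang0 a = c" for x a
  have fibre_unique: "\<exists>!a. fibre x a" if "x \<in> X" for x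
    unfolding fibre_def
    using is_pullback_unique_fill[OF pb contra_functor_Dar_in[OF F' point_PiE[OF that] y] c]
      contra_functor_Dar_bang0[OF F' point_PiE[OF that] y] yc by simp
  have fibre_component: "fibre x (Dar one_set X (point x) w)"
    if "x \<in> X" "w \<in> Dob X" "\<phi> X w = y" "Dar {} X bang0 w = c" for x w
    unfolding fibre_def
    using that contra_functor_Dar_in[OF F point_PiE[OF that(1)]] contra_functor_Dar_bang0[OF F point_PiE]
      nat_trans_commute[OF N point_PiE] by simp
  obtain w where w: "w \<in> Dob X" "\<And>x. x \<in> X \<Longrightarrow> fibre x (Dar one_set X (point x) w)"
    "Dar {} X bang0 w = c"
  proof (rule dirichlet_glue[OF D c])
    show "(THE a. fibre x a) \<in> Dob one_set" "Dar {} one_set bang0 (THE a. fibre x a) = c"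
      if "x \<in> X" for x
      using theI'[OF fibre_unique[OF that]] by (simp_all add: fibre_def)
  qed (use theI'[OF fibre_unique] in auto)
  have "\<phi> X w = y"
  proof (rule dirichlet_eqI[OF D' nat_trans_in[OF N w(1)] y])
    show "Dar' one_set X (point x) (\<phi> X w) = Dar' one_set X (point x) y" if "x \<in> X" for x
      using w(2)[OF that] nat_trans_commute[OF N point_PiE[OF that] w(1)] by (simp add: fibre_def)
    show "Dar' {} X bang0 (\<phi> X w) = Dar' {} X bang0 y"
      using nat_trans_commute[OF N bang0_PiE w(1)] w(3) yc by simp
  qed
  moreover have "v = w" if "v \<in> Dob X" "\<phi> X v = y" "Dar {} X bang0 v = c" for v
  proof (rule dirichlet_eqI[OF D that(1) w(1)])
    show "Dar one_set X (point x) v = Dar one_set X (point x) w" if "x \<in> X" for x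
      using fibre_unique[OF that] fibre_component[OF that \<open>v \<in> Dob X\<close>] w(2)[OF that]
        \<open>\<phi> X v = y\<close> \<open>Dar {} X bang0 v = c\<close> by blast
  qed (simp add: that(3) w(3))
  ultimately show "\<exists>!w. w \<in> Dob X \<and> \<phi> X w = y \<and> Dar {} X bang0 w = c"
    using w(1,3) by blast
qed

lemma dirichlet_naturality_pullback:
  assumes D: "dirichlet Dob Dar" and D': "dirichlet Dob' Dar'"
    and N: "nat_trans Dob Dar Dob' Dar' \<phi>"
    and pb: "is_pullback (Dob one_set) (Dob' one_set) (Dob {}) (Dob' {})
      (\<phi> one_set) (Dar {} one_set bang0) (Dar' {} one_set bang0) (\<phi> {})"
    and g: "g \<in> X \<rightarrow>\<^sub>E X'"
  shows "is_pullback (Dob X') (Dob' X') (Dob X) (Dob' X) (\<phi> X') (Dar X X' g) (Dar' X X' g) (\<phi> X)"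
proof (rule is_pullback_pasting_left)
  have F: "contra_functor Dob Dar" and F': "contra_functor Dob' Dar'"
    using D D' by (simp_all add: dirichlet_contra_functor)
  show "\<phi> X' \<in> Dob X' \<rightarrow> Dob' X'" using nat_trans_in[OF N] by auto
  show "Dar X X' g \<in> Dob X' \<rightarrow> Dob X" using contra_functor_Dar_in[OF F g] by auto
  show "Dar' X X' g \<in> Dob' X' \<rightarrow> Dob' X" using contra_functor_Dar_in[OF F' g] by auto
  show "Dar' X X' g (\<phi> X' w) = \<phi> X (Dar X X' g w)" if "w \<in> Dob X'" for w
    using nat_trans_commute[OF N g that] by simp
  show "Dar {} X' bang0 w = Dar {} X bang0 (Dar X X' g w)" if "w \<in> Dob X'" for w
    using contra_functor_Dar_bang0[OF F g that] by simp
  show "Dar' {} X' bang0 w = Dar' {} X bang0 (Dar' X X' g w)" if "w \<in> Dob' X'" for w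
    using contra_functor_Dar_bang0[OF F' g that] by simp
qed (rule dirichlet_bang0_pullback[OF D D' N pb])+

theorem proposition3p1:
  fixes Dob Dob' :: "'a set \<Rightarrow> 'b set"
    and Dar Dar' :: "'a set \<Rightarrow> 'a set \<Rightarrow> ('a \<Rightarrow> 'a) \<Rightarrow> 'b \<Rightarrow> 'b"
    and \<phi> :: "'a set \<Rightarrow> 'b \<Rightarrow> 'b"
  assumes "dirichlet Dob Dar" and "dirichlet Dob' Dar'"
    and "nat_trans Dob Dar Dob' Dar' \<phi>"
  shows "cartesian Dob Dar Dob' Dar' \<phi> \<longleftrightarrow>
    is_pullback (Dob one_set) (Dob' one_set) (Dob {}) (Dob' {})
      (\<phi> one_set) (Dar {} one_set bang0) (Dar' {} one_set bang0) (\<phi> {})"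
proof
  assume "cartesian Dob Dar Dob' Dar' \<phi>"
  then show "is_pullback (Dob one_set) (Dob' one_set) (Dob {}) (Dob' {})
      (\<phi> one_set) (Dar {} one_set bang0) (Dar' {} one_set bang0) (\<phi> {})"
    unfolding cartesian_def using bang0_PiE by (elim allE impE)
next
  assume "is_pullback (Dob one_set) (Dob' one_set) (Dob {}) (Dob' {})
      (\<phi> one_set) (Dar {} one_set bang0) (Dar' {} one_set bang0) (\<phi> {})"
  from dirichlet_naturality_pullback[OF assms this] show "cartesian Dob Dar Dob' Dar' \<phi>"
    unfolding cartesian_def by blast
qed

end
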